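(* The cut rule is admissible in ${\sf GWF^s_{N_2}}$: for all $D,Z\in{\sf Frm_2}$ and finite multisets $\Gamma,\Gamma'$ of ${\sf Frm_2}$-formulas, if $\Gamma\Rightarrow D$ and $D,\Gamma'\Rightarrow Z$ are derivable in ${\sf GWF^s_{N_2}}$, then $\Gamma,\Gamma'\Rightarrow Z$ is derivable in ${\sf GWF^s_{N_2}}$.
   Context: Language: countably many atoms $p,q,\dots$, the constant $\bot$, and binary connectives $\wedge,\vee,\rightarrow$ ($\rightarrow$ is strict implication). ${\sf Frm}$ is the set of formulas built from atoms and $\bot$ with $\wedge,\vee,\rightarrow$; $A,B,C,D$ range over ${\sf Frm}$. Let $\supset$ be a new binary symbol (material implication) and ${\sf Frm_1}={\sf Frm}\cup\{A\supset B : A,B\in{\sf Frm}\}$ (no nesting of $\supset$). ${\sf Frm_2}$ is the smallest set containing ${\sf Frm_1}$ and closed under $\wedge$ and $\vee$; $X,Y,Z$ range over ${\sf Frm_2}$. A single-succedent sequent is $\Gamma\Rightarrow Z$ with $\Gamma$ a finite multiset of ${\sf Frm_2}$-formulas and $Z\in{\sf Frm_2}$. The calculus ${\sf GWF^s_{N_2}}$ has initial sequents $(id^s)$ $p,\Gamma\Rightarrow p$ ($p$ an atom) and $(L^s_\bot)$ $\bot,\Gamma\Rightarrow Z$, and rules (premises / conclusion): $(L^s_\wedge)$ $X,Y,\Gamma\Rightarrow Z$ / $X\wedge Y,\Gamma\Rightarrow Z$; $(R^s_\wedge)$ $\Gamma\Rightarrow X$ and $\Gamma\Rightarrow Y$ /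 $\Gamma\Rightarrow X\wedge Y$; $(L^s_\vee)$ $X,\Gamma\Rightarrow Z$ and $Y,\Gamma\Rightarrow Z$ / $X\vee Y,\Gamma\Rightarrow Z$; $(R^s_{\vee_l})$ $\Gamma\Rightarrow X$ / $\Gamma\Rightarrow X\vee Y$; $(R^s_{\vee_r})$ $\Gamma\Rightarrow Y$ / $\Gamma\Rightarrow X\vee Y$; $(L^s_\supset)$ $A\supset B,\Gamma\Rightarrow A$ and $B,\Gamma\Rightarrow Z$ / $A\supset B,\Gamma\Rightarrow Z$; $(R^s_\supset)$ $A,\Gamma\Rightarrow B$ / $\Gamma\Rightarrow A\supset B$; $(LR^s_\rightarrow)$ $C\supset D,A\Rightarrow B$ / $\Gamma,C\rightarrow D\Rightarrow A\rightarrow B$; $(R^s_\rightarrow)$ $A\Rightarrow B$ / $\Gamma\Rightarrow A\rightarrow B$. Here $A,B,C,D\in{\sf Frm}$, $X,Y,Z\in{\sf Frm_2}$, $\Gamma$ an arbitrary finite multiset of ${\sf Frm_2}$-formulas. *)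

theory Defs
  imports Main "HOL-Library.Multiset"
begin

(* Raw syntax: one datatype; Frm and Frm2 are carved out by predicates, so every
   formula has a unique representation (A /\ B with A,B in Frm is the same object
   whether viewed in Frm or Frm2). SImp = strict implication (->), MImp = material (\<supset>). *)
datatype form = Atom nat | Bot | Conj form form | Disj form form
  | SImp form form | MImp form form

fun isFrm :: "form \<Rightarrow> bool" where
  "isFrm (Atom p) = True"
| "isFrm Bot = True"
| "isFrm (Conj A B) = (isFrm A \<and> isFrm B)"
| "isFrm (Disj A B) = (isFrm A \<and> isFrm B)"
| "isFrm (SImp A B) = (isFrm A \<and> isFrm B)"
| "isFrm (MImp A B) = False"

(* Frm2: smallest set containing Frm1 = Frm \<union> {A \<supset> B} and closed under /\ , \/ *)
fun isFrm2 :: "form \<Rightarrow> bool" where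
  "isFrm2 (Atom p) = True"
| "isFrm2 Bot = True"
| "isFrm2 (Conj X Y) = (isFrm2 X \<and> isFrm2 Y)"
| "isFrm2 (Disj X Y) = (isFrm2 X \<and> isFrm2 Y)"
| "isFrm2 (SImp A B) = (isFrm A \<and> isFrm B)"
| "isFrm2 (MImp A B) = (isFrm A \<and> isFrm B)"

definition wf_ctx :: "form multiset \<Rightarrow> bool" where
  "wf_ctx \<Gamma> \<longleftrightarrow> (\<forall>X\<in>#\<Gamma>. isFrm2 X)"

inductive deriv :: "form multiset \<Rightarrow> form \<Rightarrow> bool" where
  idS: "wf_ctx \<Gamma> \<Longrightarrow> deriv (add_mset (Atom p) \<Gamma>) (Atom p)"
| LBot: "wf_ctx \<Gamma> \<Longrightarrow> isFrm2 Z \<Longrightarrow> deriv (add_mset Bot \<Gamma>) Z"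
| LConj: "deriv (add_mset X (add_mset Y \<Gamma>)) Z \<Longrightarrow> deriv (add_mset (Conj X Y) \<Gamma>) Z"
| RConj: "deriv \<Gamma> X \<Longrightarrow> deriv \<Gamma> Y \<Longrightarrow> deriv \<Gamma> (Conj X Y)"
| LDisj: "deriv (add_mset X \<Gamma>) Z \<Longrightarrow> deriv (add_mset Y \<Gamma>) Z
          \<Longrightarrow> deriv (add_mset (Disj X Y) \<Gamma>) Z"
| RDisjL: "deriv \<Gamma> X \<Longrightarrow> isFrm2 Y \<Longrightarrow> deriv \<Gamma> (Disj X Y)"
| RDisjR: "deriv \<Gamma> Y \<Longrightarrow> isFrm2 X \<Longrightarrow> deriv \<Gamma> (Disj X Y)"
| LMImp: "isFrm A \<Longrightarrow> isFrm B \<Longrightarrow> deriv (add_mset (MImp A B) \<Gamma>) A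
          \<Longrightarrow> deriv (add_mset B \<Gamma>) Z \<Longrightarrow> deriv (add_mset (MImp A B) \<Gamma>) Z"
| RMImp: "isFrm A \<Longrightarrow> isFrm B \<Longrightarrow> deriv (add_mset A \<Gamma>) B \<Longrightarrow> deriv \<Gamma> (MImp A B)"
| LRSImp: "isFrm A \<Longrightarrow> isFrm B \<Longrightarrow> isFrm C \<Longrightarrow> isFrm D \<Longrightarrow> wf_ctx \<Gamma>
          \<Longrightarrow> deriv {#MImp C D, A#} B \<Longrightarrow> deriv (add_mset (SImp C D) \<Gamma>) (SImp A B)"
| RSImp: "isFrm A \<Longrightarrow> isFrm B \<Longrightarrow> wf_ctx \<Gamma>
          \<Longrightarrow> deriv {#A#} B \<Longrightarrow> deriv \<Gamma> (SImp A B)"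

end

theory Submission
  imports Defs
begin

(* Cut is proved admissible in its context-sharing form, by structural induction on the cut
   formula D; the stated form then follows by weakening. The left rules for \<and>, \<or> and \<supset> (the
   latter in its right premise) are invertible, and duplicated atoms can be contracted.
   If D is an atom, \<bottom>, a conjunction or a disjunction, induct on the derivation of \<Gamma> \<Rightarrow> D:
   where D is introduced on the right, inverting D, \<Gamma> \<Rightarrow> Z reduces the cut to cuts on the
   immediate subformulas of D. If D is an implication, induct on the derivation of D, \<Gamma> \<Rightarrow> Z
   instead. A principal A \<supset> B is eliminated by inverting \<Gamma> \<Rightarrow> A \<supset> B and cutting on A and B.
   A principal A \<rightarrow> B occurs only in (LR\<rightarrow>), with premise A \<supset> B, E \<Rightarrow> F; the last strict
   implication rule in the derivation of \<Gamma> \<Rightarrow> A \<rightarrow> B has a premise proving A \<supset> B, and a cut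
   on A \<supset> B there yields the premise of a derivation of \<Gamma> \<Rightarrow> E \<rightarrow> F. *)

lemma isFrm_imp_isFrm2: "isFrm A \<Longrightarrow> isFrm2 A"
  by (induction A) auto

lemma wf_ctx_empty [simp]: "wf_ctx {#}"
  by (simp add: wf_ctx_def)

lemma wf_ctx_add_mset [simp]: "wf_ctx (add_mset X \<Gamma>) \<longleftrightarrow> isFrm2 X \<and> wf_ctx \<Gamma>"
  by (auto simp: wf_ctx_def)

lemma wf_ctx_union [simp]: "wf_ctx (\<Gamma> + \<Delta>) \<longleftrightarrow> wf_ctx \<Gamma> \<and> wf_ctx \<Delta>"
  by (auto simp: wf_ctx_def)

lemma deriv_wf: "deriv \<Gamma> Z \<Longrightarrow> wf_ctx \<Gamma> \<and> isFrm2 Z"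
  by (induction rule: deriv.induct) (auto simp: isFrm_imp_isFrm2)

lemma deriv_from_member:
  assumes "X \<in># \<Gamma>" and "wf_ctx \<Gamma>" and "\<And>\<Delta>. wf_ctx \<Delta> \<Longrightarrow> deriv (add_mset X \<Delta>) Z"
  shows "deriv \<Gamma> Z"
  by (metis assms insert_DiffM wf_ctx_add_mset)

lemma deriv_weaken: "deriv \<Gamma> Z \<Longrightarrow> wf_ctx \<Delta> \<Longrightarrow> deriv (\<Gamma> + \<Delta>) Z"
  by (induction arbitrary: \<Delta> rule: deriv.induct) (auto intro: deriv.intros)

lemma deriv_weaken1: "deriv \<Gamma> Z \<Longrightarrow> isFrm2 X \<Longrightarrow> deriv (add_mset X \<Gamma>) Z"
  using deriv_weaken[of \<Gamma> Z "{#X#}"] by simp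

lemma wf_ctx_add_mset_eq:
  "add_mset X \<Delta> = add_mset Y \<Gamma> \<Longrightarrow> wf_ctx \<Delta> \<Longrightarrow> isFrm2 X \<Longrightarrow> wf_ctx \<Gamma>"
  by (metis wf_ctx_add_mset)

lemma deriv_replace_left:
  assumes "deriv (add_mset F \<Gamma>) Z" and "wf_ctx R"
    and "\<And>p. F \<noteq> Atom p" and "F \<noteq> Bot" and "\<And>A B. F \<noteq> SImp A B"
    and Conj_case: "\<And>X Y \<Gamma> Z. F = Conj X Y \<Longrightarrow>
      deriv (add_mset X (add_mset Y \<Gamma>)) Z \<Longrightarrow> deriv (R + \<Gamma>) Z"
    and Disj_case: "\<And>X Y \<Gamma> Z. F = Disj X Y \<Longrightarrow>
      deriv (add_mset X \<Gamma>) Z \<Longrightarrow> deriv (add_mset Y \<Gamma>) Z \<Longrightarrow> deriv (R + \<Gamma>) Z"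
    and MImp_case: "\<And>A B \<Gamma> Z. F = MImp A B \<Longrightarrow>
      deriv (R + \<Gamma>) A \<Longrightarrow> deriv (add_mset B \<Gamma>) Z \<Longrightarrow> deriv (R + \<Gamma>) Z"
  shows "deriv (R + \<Gamma>) Z"
  using assms(1)
proof (induction "add_mset F \<Gamma>" Z arbitrary: \<Gamma> rule: deriv.induct)
  case (idS \<Delta> p)
  have "Atom p \<in># R + \<Gamma>" "wf_ctx (R + \<Gamma>)"
    using idS insert_noteq_member[OF idS(2)[symmetric]] wf_ctx_add_mset_eq[OF idS(2)] assms(2,3)
    by auto
  then show ?case by (rule deriv_from_member) (rule deriv.idS)
next
  case (LBot \<Delta> Z)
  have "Bot \<in># R + \<Gamma>" "wf_ctx (R + \<Gamma>)"
    using LBot insert_noteq_member[OF LBot(3)[symmetric]] wf_ctx_add_mset_eq[OF LBot(3)] assms(2,4)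
    by auto
  then show ?case by (rule deriv_from_member) (rule deriv.LBot[OF _ LBot(2)])
next
  case (LConj X Y \<Delta> Z)
  show ?case
  proof (cases "Conj X Y = F")
    case True
    then show ?thesis using LConj Conj_case by auto
  next
    case False
    then obtain K where K: "\<Delta> = add_mset F K" "\<Gamma> = add_mset (Conj X Y) K"
      using add_eq_conv_ex[THEN iffD1, OF LConj(3)] by auto
    have "deriv (R + add_mset X (add_mset Y K)) Z"
      using LConj(2) K by (simp add: add_mset_commute)
    then show ?thesis using K by (simp add: deriv.LConj)
  qed
next
  case (LDisj X \<Delta> Z Y)
  show ?case
  proof (cases "Disj X Y = F")
    case True
    then show ?thesis using LDisj Disj_case by auto
  next
    case False
    then obtain K where K: "\<Delta> = add_mset F K" "\<Gamma> = add_mset (Disj X Y) K"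
      using add_eq_conv_ex[THEN iffD1, OF LDisj(5)] by auto
    have "deriv (R + add_mset X K) Z" "deriv (R + add_mset Y K) Z"
      using LDisj(2,4) K by (simp_all add: add_mset_commute)
    then show ?thesis using K by (simp add: deriv.LDisj)
  qed
next
  case (LMImp A B \<Delta> Z)
  show ?case
  proof (cases "MImp A B = F")
    case True
    then show ?thesis using LMImp MImp_case by auto
  next
    case False
    then obtain K where K: "\<Delta> = add_mset F K" "\<Gamma> = add_mset (MImp A B) K"
      using add_eq_conv_ex[THEN iffD1, OF LMImp(7)] by auto
    have "deriv (R + add_mset (MImp A B) K) A" "deriv (R + add_mset B K) Z"
      using LMImp(4,6) K by (simp_all add: add_mset_commute)
    then show ?thesis using K LMImp(1,2) by (simp add: deriv.LMImp)
  qed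
next
  case (RMImp A B)
  have "deriv (R + add_mset A \<Gamma>) B"
    using RMImp(4) by (simp add: add_mset_commute)
  then show ?case using RMImp(1,2) by (simp add: deriv.RMImp)
next
  case (LRSImp A B C D \<Delta>)
  have "SImp C D \<in># R + \<Gamma>" "wf_ctx (R + \<Gamma>)"
    using LRSImp insert_noteq_member[OF LRSImp(8)[symmetric]] wf_ctx_add_mset_eq[OF LRSImp(8)]
      assms(2,5)
    by auto
  then show ?case by (rule deriv_from_member) (rule deriv.LRSImp[OF LRSImp(1-4) _ LRSImp(6)])
next
  case (RSImp A B)
  then show ?case using assms(2) by (simp add: deriv.RSImp)
qed (auto intro: deriv.intros)

lemma deriv_LConj_inv:
  assumes "deriv (add_mset (Conj X Y) \<Gamma>) Z"
  shows "deriv (add_mset X (add_mset Y \<Gamma>)) Z"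
  using deriv_replace_left[OF assms, of "{#X, Y#}"] deriv_wf[OF assms] by auto

lemma deriv_LDisj_inv1:
  assumes "deriv (add_mset (Disj X Y) \<Gamma>) Z"
  shows "deriv (add_mset X \<Gamma>) Z"
  using deriv_replace_left[OF assms, of "{#X#}"] deriv_wf[OF assms] by auto

lemma deriv_LDisj_inv2:
  assumes "deriv (add_mset (Disj X Y) \<Gamma>) Z"
  shows "deriv (add_mset Y \<Gamma>) Z"
  using deriv_replace_left[OF assms, of "{#Y#}"] deriv_wf[OF assms] by auto

lemma deriv_LMImp_inv:
  assumes "deriv (add_mset (MImp A B) \<Gamma>) Z"
  shows "deriv (add_mset B \<Gamma>) Z"
  using deriv_replace_left[OF assms, of "{#B#}"] deriv_wf[OF assms] by (auto simp: isFrm_imp_isFrm2)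

lemma deriv_RMImp_inv: "deriv \<Gamma> (MImp A B) \<Longrightarrow> deriv (add_mset A \<Gamma>) B"
proof (induction \<Gamma> "MImp A B" rule: deriv.induct)
  case (LBot \<Gamma>)
  then have "deriv (add_mset Bot (add_mset A \<Gamma>)) B"
    by (intro deriv.LBot) (simp_all add: isFrm_imp_isFrm2)
  then show ?case by (simp add: add_mset_commute)
next
  case (LConj X Y \<Gamma>)
  then show ?case using deriv.LConj[of X Y "add_mset A \<Gamma>" B] by (auto simp: add_mset_commute)
next
  case (LDisj X \<Gamma> Y)
  then show ?case using deriv.LDisj[of X "add_mset A \<Gamma>" B Y] by (auto simp: add_mset_commute)
next
  case (LMImp C D \<Gamma>)
  have "deriv (add_mset A (add_mset (MImp C D) \<Gamma>)) C"
    using deriv_weaken1[OF LMImp(3)] deriv_wf[OF LMImp(5)] by (simp add: isFrm_imp_isFrm2)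
  then show ?case
    using LMImp(1,2,6) deriv.LMImp[of C D "add_mset A \<Gamma>" B] by (simp add: add_mset_commute)
qed

lemma deriv_contract_Atom:
  "deriv (add_mset (Atom q) \<Gamma>) Z \<Longrightarrow> Atom q \<in># \<Gamma> \<Longrightarrow> deriv \<Gamma> Z"
proof (induction "add_mset (Atom q) \<Gamma>" Z arbitrary: \<Gamma> rule: deriv.induct)
  case (idS \<Delta> p)
  have "Atom p \<in># \<Gamma>"
    using idS(3) insert_noteq_member[OF idS(2)[symmetric]] by metis
  moreover have "wf_ctx \<Gamma>"
    using wf_ctx_add_mset_eq[OF idS(2,1)] by simp
  ultimately show ?case by (rule deriv_from_member) (rule deriv.idS)
next
  case (LBot \<Delta> Z)
  have "Bot \<in># \<Gamma>" "wf_ctx \<Gamma>"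
    using LBot insert_noteq_member[OF LBot(3)[symmetric]] wf_ctx_add_mset_eq[OF LBot(3)] by auto
  then show ?case by (rule deriv_from_member) (rule deriv.LBot[OF _ LBot(2)])
next
  case (LConj X Y \<Delta> Z)
  obtain K where K: "\<Delta> = add_mset (Atom q) K" "\<Gamma> = add_mset (Conj X Y) K"
    using add_eq_conv_ex[THEN iffD1, OF LConj(3)] by auto
  have "deriv (add_mset X (add_mset Y K)) Z"
    using LConj(2,4) K by (simp add: add_mset_commute)
  then show ?case using K by (simp add: deriv.LConj)
next
  case (LDisj X \<Delta> Z Y)
  obtain K where K: "\<Delta> = add_mset (Atom q) K" "\<Gamma> = add_mset (Disj X Y) K"
    using add_eq_conv_ex[THEN iffD1, OF LDisj(5)] by auto
  have "deriv (add_mset X K) Z" "deriv (add_mset Y K) Z"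
    using LDisj(2,4,6) K by (simp_all add: add_mset_commute)
  then show ?case using K by (simp add: deriv.LDisj)
next
  case (LMImp A B \<Delta> Z)
  obtain K where K: "\<Delta> = add_mset (Atom q) K" "\<Gamma> = add_mset (MImp A B) K"
    using add_eq_conv_ex[THEN iffD1, OF LMImp(7)] by auto
  have "deriv (add_mset (MImp A B) K) A" "deriv (add_mset B K) Z"
    using LMImp(4,6,8) K by (simp_all add: add_mset_commute)
  then show ?case using K LMImp(1,2) by (simp add: deriv.LMImp)
next
  case (RMImp A B)
  have "deriv (add_mset A \<Gamma>) B"
    using RMImp(4,5) by (simp add: add_mset_commute)
  then show ?case using RMImp(1,2) by (simp add: deriv.RMImp)
next
  case (LRSImp A B C D \<Delta>)
  have "SImp C D \<in># \<Gamma>" "wf_ctx \<Gamma>"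
    using LRSImp insert_noteq_member[OF LRSImp(8)[symmetric]] wf_ctx_add_mset_eq[OF LRSImp(8)]
    by auto
  then show ?case by (rule deriv_from_member) (rule deriv.LRSImp[OF LRSImp(1-4) _ LRSImp(6)])
next
  case (RSImp A B)
  then have "wf_ctx \<Gamma>" by (metis wf_ctx_add_mset)
  then show ?case using RSImp(1,2,4) by (simp add: deriv.RSImp)
qed (auto intro: deriv.intros)

definition cut_admissible :: "form \<Rightarrow> bool" where
  "cut_admissible D \<longleftrightarrow>
    (\<forall>\<Gamma> Z. deriv \<Gamma> D \<longrightarrow> deriv (add_mset D \<Gamma>) Z \<longrightarrow> deriv \<Gamma> Z)"

lemma cut_admissibleD:
  "cut_admissible D \<Longrightarrow> deriv \<Gamma> D \<Longrightarrow> deriv (add_mset D \<Gamma>) Z \<Longrightarrow> deriv \<Gamma> Z"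
  unfolding cut_admissible_def by blast

lemma cut_admissible_by_left_derivation:
  assumes "\<And>A B. D \<noteq> MImp A B" and "\<And>A B. D \<noteq> SImp A B"
    and Conj_principal: "\<And>X Y \<Gamma> Z. D = Conj X Y \<Longrightarrow> deriv \<Gamma> X \<Longrightarrow> deriv \<Gamma> Y \<Longrightarrow>
      deriv (add_mset D \<Gamma>) Z \<Longrightarrow> deriv \<Gamma> Z"
    and Disj_principal: "\<And>X Y \<Gamma> Z. D = Disj X Y \<Longrightarrow> deriv \<Gamma> X \<or> deriv \<Gamma> Y \<Longrightarrow>
      deriv (add_mset D \<Gamma>) Z \<Longrightarrow> deriv \<Gamma> Z"
  shows "cut_admissible D"
proof -
  have "deriv \<Gamma> W \<Longrightarrow> W = D \<Longrightarrow> deriv (add_mset D \<Gamma>) Z \<Longrightarrow> deriv \<Gamma> Z" for \<Gamma> W Z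
  proof (induction arbitrary: Z rule: deriv.induct)
    case (idS \<Delta> p)
    then show ?case using deriv_contract_Atom[of p "add_mset (Atom p) \<Delta>" Z] by auto
  next
    case (LBot \<Delta>)
    then show ?case using deriv_wf deriv.LBot by metis
  next
    case (LConj X Y \<Delta>)
    have "deriv (add_mset D (add_mset X (add_mset Y \<Delta>))) Z"
      using deriv_LConj_inv[of X Y "add_mset D \<Delta>"] LConj.prems(2) by (simp add: add_mset_commute)
    then show ?case by (rule deriv.LConj[OF LConj.IH[OF LConj.prems(1)]])
  next
    case (RConj \<Delta> X Y)
    then show ?case using Conj_principal[of X Y \<Delta> Z] by metis
  next
    case (LDisj X \<Delta> W Y)
    have "deriv (add_mset D (add_mset X \<Delta>)) Z" "deriv (add_mset D (add_mset Y \<Delta>)) Z"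
      using deriv_LDisj_inv1[of X Y "add_mset D \<Delta>"] deriv_LDisj_inv2[of X Y "add_mset D \<Delta>"]
        LDisj.prems(2) by (simp_all add: add_mset_commute)
    then show ?case by (rule deriv.LDisj[OF LDisj.IH[OF LDisj.prems(1)]])
  next
    case (RDisjL \<Delta> X Y)
    then show ?case using Disj_principal[of X Y \<Delta> Z] by metis
  next
    case (RDisjR \<Delta> Y X)
    then show ?case using Disj_principal[of X Y \<Delta> Z] by metis
  next
    case (LMImp A B \<Delta>)
    have "deriv (add_mset D (add_mset B \<Delta>)) Z"
      using deriv_LMImp_inv[of A B "add_mset D \<Delta>"] LMImp.prems(2) by (simp add: add_mset_commute)
    then show ?case by (rule deriv.LMImp[OF LMImp.hyps(1-3) LMImp.IH(2)[OF LMImp.prems(1)]])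
  qed (use assms(1,2) in blast)+
  then show ?thesis unfolding cut_admissible_def by blast
qed

lemma cut_admissible_Atom: "cut_admissible (Atom p)"
  by (rule cut_admissible_by_left_derivation) simp_all

lemma cut_admissible_Bot: "cut_admissible Bot"
  by (rule cut_admissible_by_left_derivation) simp_all

lemma cut_admissible_Conj:
  assumes "cut_admissible X" and "cut_admissible Y"
  shows "cut_admissible (Conj X Y)"
proof (rule cut_admissible_by_left_derivation)
  fix X' Y' \<Gamma> Z
  assume "Conj X Y = Conj X' Y'" and "deriv \<Gamma> X'" and "deriv \<Gamma> Y'"
    and "deriv (add_mset (Conj X Y) \<Gamma>) Z"
  then have "deriv \<Gamma> X" "deriv (add_mset X \<Gamma>) Y" "deriv (add_mset Y (add_mset X \<Gamma>)) Z"
    using deriv_weaken1 deriv_wf deriv_LConj_inv by (auto simp: add_mset_commute)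
  then show "deriv \<Gamma> Z"
    using assms by (blast intro: cut_admissibleD)
qed simp_all

lemma cut_admissible_Disj:
  assumes "cut_admissible X" and "cut_admissible Y"
  shows "cut_admissible (Disj X Y)"
proof (rule cut_admissible_by_left_derivation)
  fix X' Y' \<Gamma> Z
  assume "Disj X Y = Disj X' Y'" and "deriv \<Gamma> X' \<or> deriv \<Gamma> Y'"
    and right: "deriv (add_mset (Disj X Y) \<Gamma>) Z"
  then show "deriv \<Gamma> Z"
    using assms deriv_LDisj_inv1[OF right] deriv_LDisj_inv2[OF right] by (blast intro: cut_admissibleD)
qed simp_all

lemma cut_admissible_by_right_derivation:
  assumes "\<And>p. D \<noteq> Atom p" and "D \<noteq> Bot" and "\<And>X Y. D \<noteq> Conj X Y" and "\<And>X Y. D \<noteq> Disj X Y"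
    and MImp_principal: "\<And>A B \<Gamma> Z. D = MImp A B \<Longrightarrow> deriv \<Gamma> D \<Longrightarrow> deriv \<Gamma> A \<Longrightarrow>
      deriv (add_mset B \<Gamma>) Z \<Longrightarrow> deriv \<Gamma> Z"
    and SImp_principal: "\<And>A B E F \<Gamma>. D = SImp A B \<Longrightarrow> deriv \<Gamma> D \<Longrightarrow>
      deriv {#MImp A B, E#} F \<Longrightarrow> isFrm E \<Longrightarrow> isFrm F \<Longrightarrow> deriv \<Gamma> (SImp E F)"
  shows "cut_admissible D"
proof -
  have "deriv (add_mset D \<Gamma>) Z \<Longrightarrow> deriv \<Gamma> D \<Longrightarrow> deriv \<Gamma> Z" for \<Gamma> Z
  proof (induction "add_mset D \<Gamma>" Z arbitrary: \<Gamma> rule: deriv.induct)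
    case (idS \<Delta> p)
    have "Atom p \<in># \<Gamma>"
      using insert_noteq_member[OF idS(2)[symmetric]] assms(1) by simp
    then show ?case using deriv_wf[OF idS(3)] by (blast intro: deriv_from_member deriv.idS)
  next
    case (LBot \<Delta> Z)
    have "Bot \<in># \<Gamma>"
      using insert_noteq_member[OF LBot(3)[symmetric]] assms(2) by simp
    then show ?case using deriv_wf[OF LBot(4)] LBot(2) by (blast intro: deriv_from_member deriv.LBot)
  next
    case (LConj X Y \<Delta> Z)
    obtain K where K: "\<Delta> = add_mset D K" "\<Gamma> = add_mset (Conj X Y) K"
      using add_eq_conv_ex[THEN iffD1, OF LConj(3)] assms(3) by auto
    have "deriv (add_mset X (add_mset Y K)) D"
      using deriv_LConj_inv[of X Y K D] LConj(4) K by simp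
    then have "deriv (add_mset X (add_mset Y K)) Z"
      using LConj(2) K by (simp add: add_mset_commute)
    then show ?case using K by (simp add: deriv.LConj)
  next
    case (LDisj X \<Delta> Z Y)
    obtain K where K: "\<Delta> = add_mset D K" "\<Gamma> = add_mset (Disj X Y) K"
      using add_eq_conv_ex[THEN iffD1, OF LDisj(5)] assms(4) by auto
    have "deriv (add_mset X K) D" "deriv (add_mset Y K) D"
      using deriv_LDisj_inv1[of X Y K D] deriv_LDisj_inv2[of X Y K D] LDisj(6) K by simp_all
    then have "deriv (add_mset X K) Z" "deriv (add_mset Y K) Z"
      using LDisj(2,4) K by (simp_all add: add_mset_commute)
    then show ?case using K by (simp add: deriv.LDisj)
  next
    case (LMImp A B \<Delta> Z)
    have "deriv \<Gamma> A"
      using LMImp(4,7,8) by simp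
    show ?case
    proof (cases "D = MImp A B")
      case True
      then have "\<Delta> = \<Gamma>" using LMImp(7) by simp
      then show ?thesis using MImp_principal[OF True LMImp(8) `deriv \<Gamma> A`] LMImp(5) by simp
    next
      case False
      then obtain K where K: "\<Delta> = add_mset D K" "\<Gamma> = add_mset (MImp A B) K"
        using add_eq_conv_ex[THEN iffD1, OF LMImp(7)] by auto
      have "deriv (add_mset B K) D"
        using deriv_LMImp_inv[of A B K D] LMImp(8) K by simp
      then have "deriv (add_mset B K) Z"
        using LMImp(6) K by (simp add: add_mset_commute)
      then show ?thesis using K LMImp(1,2) `deriv \<Gamma> A` by (simp add: deriv.LMImp)
    qed
  next
    case (RMImp A B)
    have "deriv (add_mset A \<Gamma>) D"
      using deriv_weaken1[OF RMImp(5)] RMImp(1) by (simp add: isFrm_imp_isFrm2)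
    then have "deriv (add_mset A \<Gamma>) B"
      using RMImp(4) by (simp add: add_mset_commute)
    then show ?case using RMImp(1,2) by (simp add: deriv.RMImp)
  next
    case (LRSImp A B C D' \<Delta>)
    show ?case
    proof (cases "D = SImp C D'")
      case True
      then show ?thesis using LRSImp SImp_principal by simp
    next
      case False
      then have "SImp C D' \<in># \<Gamma>"
        using insert_noteq_member[OF LRSImp(8)[symmetric]] by simp
      then show ?thesis using deriv_wf[OF LRSImp(9)]
        by (blast intro: deriv_from_member deriv.LRSImp[OF LRSImp(1-4) _ LRSImp(6)])
    qed
  next
    case (RSImp A B)
    then show ?case using deriv_wf[OF RSImp(5)] by (simp add: deriv.RSImp)
  next
    case RConj
    then show ?case by (blast intro: deriv.RConj)
  next
    case RDisjL
    then show ?case by (blast intro: deriv.RDisjL)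
  next
    case RDisjR
    then show ?case by (blast intro: deriv.RDisjR)
  qed
  then show ?thesis unfolding cut_admissible_def by blast
qed

lemma deriv_SImp_cut:
  assumes "cut_admissible (MImp A B)" and "deriv \<Gamma> (SImp A B)"
    and E_F: "deriv {#MImp A B, E#} F" and "isFrm E" and "isFrm F"
  shows "deriv \<Gamma> (SImp E F)"
  using assms(2)
proof (induction \<Gamma> "SImp A B" rule: deriv.induct)
  case (LBot \<Gamma>)
  then show ?case using assms(4,5) by (simp add: deriv.LBot)
next
  case (LConj X Y \<Gamma>)
  show ?case by (rule deriv.LConj[OF LConj(2)])
next
  case (LDisj X \<Gamma> Y)
  show ?case by (rule deriv.LDisj[OF LDisj(2,4)])
next
  case (LMImp C D \<Gamma>)
  show ?case by (rule deriv.LMImp[OF LMImp(1-3,6)])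
next
  case (LRSImp C D \<Gamma>)
  have "deriv {#MImp C D#} (MImp A B)"
    using LRSImp by (simp add: add_mset_commute deriv.RMImp)
  then have "deriv {#MImp C D, E#} (MImp A B)"
    using deriv_weaken1 assms(4) isFrm_imp_isFrm2 by (simp add: add_mset_commute)
  moreover have "deriv (add_mset (MImp A B) {#MImp C D, E#}) F"
    using deriv_weaken1[OF E_F, of "MImp C D"] LRSImp(3,4) by (simp add: add_mset_commute)
  ultimately have "deriv {#MImp C D, E#} F"
    by (rule cut_admissibleD[OF assms(1)])
  then show ?case using LRSImp assms(4,5) by (simp add: deriv.LRSImp)
next
  case (RSImp \<Gamma>)
  have "deriv {#E#} (MImp A B)"
    using deriv_weaken1[OF deriv.RMImp[of A B "{#}"]] RSImp assms(4) by (simp add: isFrm_imp_isFrm2)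
  then have "deriv {#E#} F"
    using assms(1) E_F by (simp add: cut_admissibleD)
  then show ?case using RSImp assms(4,5) by (simp add: deriv.RSImp)
qed

lemma cut_admissible_MImp:
  assumes "cut_admissible A" and "cut_admissible B"
  shows "cut_admissible (MImp A B)"
proof (rule cut_admissible_by_right_derivation)
  fix A' B' \<Gamma> Z
  assume "MImp A B = MImp A' B'" and "deriv \<Gamma> (MImp A B)" and "deriv \<Gamma> A'"
    and "deriv (add_mset B' \<Gamma>) Z"
  then have "deriv \<Gamma> A" "deriv (add_mset A \<Gamma>) B" "deriv (add_mset B \<Gamma>) Z"
    using deriv_RMImp_inv by auto
  then show "deriv \<Gamma> Z"
    using assms by (blast intro: cut_admissibleD)
qed simp_all

lemma cut_admissible_SImp:
  assumes "cut_admissible (MImp A B)"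
  shows "cut_admissible (SImp A B)"
  by (rule cut_admissible_by_right_derivation) (use assms deriv_SImp_cut in auto)

(* A cut on A \<rightarrow> B reduces to one on A \<supset> B, which has the same immediate subformulas. *)
lemma cut_admissible: "cut_admissible D"
  by (induction D)
    (simp_all add: cut_admissible_Atom cut_admissible_Bot cut_admissible_Conj cut_admissible_Disj
      cut_admissible_MImp cut_admissible_SImp)

theorem theorem5p3:
  assumes "isFrm2 D" and "isFrm2 Z" and "wf_ctx \<Gamma>" and "wf_ctx \<Gamma>'"
    and "deriv \<Gamma> D" and "deriv (add_mset D \<Gamma>') Z"
  shows "deriv (\<Gamma> + \<Gamma>') Z"
proof -
  have "deriv (\<Gamma> + \<Gamma>') D"
    using deriv_weaken assms(4,5) by blast
  moreover have "deriv (add_mset D (\<Gamma> + \<Gamma>')) Z"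
    using deriv_weaken[OF assms(6,3)] by (simp add: add.commute)
  ultimately show ?thesis
    by (rule cut_admissibleD[OF cut_admissible])
qed

end
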